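(* Let $n\ge 2$ and $A=(A_1,\dots,A_n)\in V_n$. If $A$ is similar to an upper triangular $n$-matrix, then $\sigma_{jk}(A)=0$ for all distinct $1\le j,k\le n$.
   Context: $V_n=(M_{2\times2}(\mathbb{C}))^{\times n}$ with $GL(2,\mathbb{C})$ acting by simultaneous conjugation $g\cdot A=(gA_1g^{-1},\dots,gA_ng^{-1})$; two elements are similar if they lie in the same orbit. $A$ is an upper triangular $n$-matrix if every $A_j$ is upper triangular. With $t_j=\mathsf{tr}(A_j)$, $t_{jk}=\mathsf{tr}(A_jA_k)$, define $\tau_{jk}=t_{jk}-\tfrac12 t_jt_k$ and $\sigma_{jk}=\tau_{jk}^2-\tau_{jj}\tau_{kk}$. *)

theory Defs
  imports "HOL-Analysis.Analysis"
begin

type_synonym mat2 = "complex^2^2"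

text \<open>An n-tuple (A_1,...,A_n) of 2x2 complex matrices, represented as a function on
  indices, of which only 1..n are relevant.\<close>

definition mtr :: "mat2 \<Rightarrow> complex" where
  "mtr M = (\<Sum>i\<in>UNIV. M $ i $ i)"

definition upper_tri2 :: "mat2 \<Rightarrow> bool" where
  "upper_tri2 M \<longleftrightarrow> M $ 2 $ 1 = 0"

definition upper_triangular_tuple :: "nat \<Rightarrow> (nat \<Rightarrow> mat2) \<Rightarrow> bool" where
  "upper_triangular_tuple n A \<longleftrightarrow> (\<forall>j\<in>{1..n}. upper_tri2 (A j))"

definition similar_tuple :: "nat \<Rightarrow> (nat \<Rightarrow> mat2) \<Rightarrow> (nat \<Rightarrow> mat2) \<Rightarrow> bool" where
  "similar_tuple n A B \<longleftrightarrow>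
     (\<exists>g. invertible g \<and> (\<forall>j\<in>{1..n}. B j = g ** A j ** matrix_inv g))"

definition t1 :: "(nat \<Rightarrow> mat2) \<Rightarrow> nat \<Rightarrow> complex" where
  "t1 A j = mtr (A j)"

definition t2 :: "(nat \<Rightarrow> mat2) \<Rightarrow> nat \<Rightarrow> nat \<Rightarrow> complex" where
  "t2 A j k = mtr (A j ** A k)"

definition tau :: "(nat \<Rightarrow> mat2) \<Rightarrow> nat \<Rightarrow> nat \<Rightarrow> complex" where
  "tau A j k = t2 A j k - (1/2) * t1 A j * t1 A k"

definition sigma :: "(nat \<Rightarrow> mat2) \<Rightarrow> nat \<Rightarrow> nat \<Rightarrow> complex" where
  "sigma A j k = (tau A j k)^2 - tau A j j * tau A k k"

end

theory Submission
  imports Defs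
begin

text \<open>The invariants t1 and t2 are traces, hence unchanged under simultaneous conjugation,
  so sigma may be computed on the upper triangular representative. There, with diagonal
  entries (a1, a2) of A_j and (b1, b2) of A_k, one finds
  tau_jk = (a1 - a2)(b1 - b2)/2, and so tau_jk^2 = tau_jj tau_kk. This holds for j = k as well.\<close>

lemma mtr_eq_trace: "mtr M = trace M"
  by (simp add: mtr_def trace_def)

lemma matrix_mul_inv:
  fixes A :: "'a::semiring_1^'n^'m"
  assumes "invertible A"
  shows "A ** matrix_inv A = mat 1" "matrix_inv A ** A = mat 1"
proof -
  have "\<exists>A'. A ** A' = mat 1 \<and> A' ** A = mat 1"
    using assms by (simp add: invertible_def)
  from someI_ex[OF this] show "A ** matrix_inv A = mat 1" "matrix_inv A ** A = mat 1"
    by (simp_all add: matrix_inv_def)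
qed

lemma matrix_mul_conj:
  fixes g M N :: "'a::semiring_1^'n^'n"
  assumes "invertible g"
  shows "(g ** M ** matrix_inv g) ** (g ** N ** matrix_inv g) = g ** (M ** N) ** matrix_inv g"
proof -
  have "(g ** M ** matrix_inv g) ** (g ** N ** matrix_inv g)
      = g ** M ** (matrix_inv g ** g) ** N ** matrix_inv g"
    by (simp only: matrix_mul_assoc)
  also have "\<dots> = g ** (M ** N) ** matrix_inv g"
    by (simp only: matrix_mul_inv[OF assms] matrix_mul_rid matrix_mul_assoc)
  finally show ?thesis .
qed

lemma trace_conj:
  fixes g M :: "'a::comm_semiring_1^'n^'n"
  assumes "invertible g"
  shows "trace (g ** M ** matrix_inv g) = trace M"
proof -
  have "trace (g ** M ** matrix_inv g) = trace (matrix_inv g ** (g ** M))"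
    by (rule trace_mul_sym)
  also have "\<dots> = trace M"
    by (simp only: matrix_mul_assoc matrix_mul_inv[OF assms] matrix_mul_lid)
  finally show ?thesis .
qed

lemma sigma_conj:
  assumes g: "invertible g"
    and Bj: "B j = g ** A j ** matrix_inv g" and Bk: "B k = g ** A k ** matrix_inv g"
  shows "sigma B j k = sigma A j k"
proof -
  have t1: "t1 B i = t1 A i" if "i \<in> {j, k}" for i
    using that Bj Bk by (auto simp: t1_def mtr_eq_trace trace_conj[OF g])
  have t2: "t2 B i l = t2 A i l" if "i \<in> {j, k}" "l \<in> {j, k}" for i l
    using that Bj Bk by (auto simp: t2_def mtr_eq_trace matrix_mul_conj[OF g] trace_conj[OF g])
  show ?thesis
    by (simp add: sigma_def tau_def t1 t2)
qed

lemma tau_upper_tri2: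
  assumes "upper_tri2 (A j)" "upper_tri2 (A k)"
  shows "tau A j k = (A j $ 1 $ 1 - A j $ 2 $ 2) * (A k $ 1 $ 1 - A k $ 2 $ 2) / 2"
  using assms
  by (simp add: tau_def t1_def t2_def mtr_def sum_2 matrix_matrix_mult_def upper_tri2_def)
    (simp add: field_simps)

lemma sigma_upper_tri2:
  assumes "upper_tri2 (A j)" "upper_tri2 (A k)"
  shows "sigma A j k = 0"
  using assms by (simp add: sigma_def tau_upper_tri2 power2_eq_square)

theorem proposition2p5:
  fixes n :: nat and A :: "nat \<Rightarrow> complex^2^2"
  assumes "n \<ge> 2"
    and "\<exists>B. upper_triangular_tuple n B \<and> similar_tuple n A B"
  shows "\<forall>j\<in>{1..n}. \<forall>k\<in>{1..n}. j \<noteq> k \<longrightarrow> sigma A j k = 0"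
proof (intro ballI impI)
  fix j k assume j: "j \<in> {1..n}" and k: "k \<in> {1..n}"
  obtain B g where B: "upper_triangular_tuple n B" and g: "invertible g"
    and conj: "\<forall>i\<in>{1..n}. B i = g ** A i ** matrix_inv g"
    using assms(2) unfolding similar_tuple_def by blast
  have "sigma A j k = sigma B j k"
    using j k conj by (intro sigma_conj[OF g, symmetric]) auto
  also have "\<dots> = 0"
    using j k B by (intro sigma_upper_tri2) (auto simp: upper_triangular_tuple_def)
  finally show "sigma A j k = 0" .
qed

end
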